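(* Let $f_0(x)=\log|\cos\pi x|$ on $\mathbb T$. Then $\alpha(0):=\inf_{\mu\in\mathcal M_T}\int f_0\,d\mu=-\log2$ and $\beta(0):=\sup_{\mu\in\mathcal M_T}\int f_0\,d\mu=0$. Moreover, the limit $$\lim_{n\to\infty}\frac1n\sum_{k=0}^{n-1}\log|\cos\pi2^kx|,$$ whenever it exists, takes only one of the three values $0$, $-\log2$, $-\infty$: it equals $0$ at $x=0$, it equals $-\infty$ at the dyadic rationals $x=\frac{2k+1}{2^m}$, and otherwise it can only be $-\log 2$, which is attained on a set of full Lebesgue measure.
   Context: $\mathbb T=\mathbb R/\mathbb Z$, $Tx=2x\bmod1$, $\mathcal M_T$ the set of $T$-invariant Borel probability measures; convention $\log0=-\infty$. *)

theory Defs
  imports "HOL-Probability.Probability"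
begin

text \<open>The circle T = R/Z is represented by the fundamental domain [0,1) with its Borel
  sigma-algebra; the doubling map is x \<mapsto> 2x mod 1.\<close>

definition circle_borel :: "real measure" where
  "circle_borel = restrict_space borel {0..<1}"

definition doubling :: "real \<Rightarrow> real" where
  "doubling x = frac (2 * x)"

definition invariant_measures :: "real measure set" where
  "invariant_measures = {\<mu>. sets \<mu> = sets circle_borel \<and> prob_space \<mu> \<and>
     (\<forall>A \<in> sets \<mu>. emeasure \<mu> (doubling -` A \<inter> space \<mu>) = emeasure \<mu> A)}"

definition f0 :: "real \<Rightarrow> ereal" where
  "f0 x = (if cos (pi * x) = 0 then -\<infinity> else ereal (ln \<bar>cos (pi * x)\<bar>))"

text \<open>Integral of the nonpositive function f_0 against \<mu>, a value in [-infinity, 0].\<close>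
definition int_f0 :: "real measure \<Rightarrow> ereal" where
  "int_f0 \<mu> = - enn2ereal (\<integral>\<^sup>+ x. e2ennreal (- f0 x) \<partial>\<mu>)"

definition birkhoff_avg :: "nat \<Rightarrow> real \<Rightarrow> ereal" where
  "birkhoff_avg n x = ereal (1 / real n) * (\<Sum>k<n. f0 (2 ^ k * x))"

definition dyadic_odd :: "real \<Rightarrow> bool" where
  "dyadic_odd x \<longleftrightarrow> (\<exists>(k::int) (m::nat). m \<ge> 1 \<and> x = real_of_int (2 * k + 1) / 2 ^ m)"

end

theory Submission
  imports Defs
begin

(* Everything rests on the telescoping identity
     2^n sin(pi x) cos(pi x) cos(2 pi x) ... cos(2^(n-1) pi x) = sin(2^n pi x),
   i.e. f0 = g o T - g - log 2 with g x = log|sin(pi x)|.  At a dyadic rational some factor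
   vanishes and the average is -infinity; at any other x the n-th Birkhoff average is
   (log|sin(2^n pi x)| - log|sin(pi x)|)/n - log 2, so only the speed at which 2^n x can approach
   the integers matters.  A limit other than -log 2 would force exponentially fast approach, which
   is impossible because near the integers the doubling map doubles the distance to them; and by
   Borel-Cantelli, for Lebesgue-almost every x the approach is slower than every exponential.
   Integrating the coboundary relation against an invariant measure (after truncating g from
   below, with Fatou's lemma for the limit) gives int f0 >= -log 2.  Equality holds for the
   periodic orbit {1/3, 2/3}, and the fixed point 0 gives int f0 = 0. *)

lemma sin_pi_pow2_Suc:
  "sin (pi * (2 ^ Suc n * x)) = 2 * sin (pi * (2 ^ n * x)) * cos (pi * (2 ^ n * x))"
  using sin_double[of "pi * (2 ^ n * x)"] by (simp add: mult.assoc mult.left_commute)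

lemma abs_sin_pi_diff_int: "\<bar>sin (pi * (t - of_int k))\<bar> = \<bar>sin (pi * t)\<bar>"
proof -
  have "(cos (pi * of_int k))\<^sup>2 = 1"
    using sin_cos_squared_add[of "pi * of_int k"] by simp
  then have "\<bar>cos (pi * of_int k)\<bar> = 1"
    using abs_square_eq_1 by blast
  then show ?thesis
    by (simp add: right_diff_distrib sin_diff abs_mult)
qed

lemma abs_sin_pi_doubling: "\<bar>sin (pi * doubling x)\<bar> = 2 * \<bar>sin (pi * x)\<bar> * \<bar>cos (pi * x)\<bar>"
proof -
  have "\<bar>sin (pi * doubling x)\<bar> = \<bar>sin (pi * (2 * x))\<bar>"
    using abs_sin_pi_diff_int[of "2 * x" "\<lfloor>2 * x\<rfloor>"] by (simp add: doubling_def frac_def)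
  also have "pi * (2 * x) = 2 * (pi * x)"
    by (metis mult.left_commute)
  finally show ?thesis
    by (simp add: sin_double abs_mult)
qed

lemma abs_sin_le_abs_sin_double:
  fixes t :: real
  assumes "\<bar>sin t\<bar> < 1/2"
  shows "\<bar>sin t\<bar> \<le> \<bar>sin (2 * t)\<bar>"
proof -
  have "\<bar>sin t\<bar>\<^sup>2 < (1/2)\<^sup>2"
    using assms by (intro power_strict_mono) auto
  have "1/2 \<le> \<bar>cos t\<bar>"
  proof (rule ccontr)
    assume "\<not> 1/2 \<le> \<bar>cos t\<bar>"
    then have "\<bar>cos t\<bar>\<^sup>2 < (1/2)\<^sup>2"
      by (intro power_strict_mono) auto
    with \<open>\<bar>sin t\<bar>\<^sup>2 < (1/2)\<^sup>2\<close> show False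
      using sin_cos_squared_add[of t] by (simp add: power_divide)
  qed
  then have "\<bar>sin t\<bar> * 1 \<le> \<bar>sin t\<bar> * (2 * \<bar>cos t\<bar>)"
    by (intro mult_left_mono) auto
  then show ?thesis
    by (simp add: sin_double abs_mult)
qed

lemma sin_ge_third:
  fixes y :: real
  assumes "0 \<le> y" "y \<le> 2"
  shows "y / 3 \<le> sin y"
proof -
  have "\<bar>sin y - (\<Sum>m<3. sin_coeff m * y ^ m)\<bar> \<le> inverse (fact 3) * \<bar>y\<bar> ^ 3"
    by (rule Maclaurin_sin_bound)
  then have "\<bar>sin y - y\<bar> \<le> y ^ 3 / 6"
    using assms by (simp add: sin_coeff_def numeral_3_eq_3 fact_numeral)
  then have "y - y ^ 3 / 6 \<le> sin y"
    using abs_ge_minus_self[of "sin y - y"] by linarith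
  moreover have "y ^ 3 \<le> 4 * y"
    using assms mult_mono[of y 2 y 2] mult_right_mono[of "y * y" 4 y] by (simp add: power3_eq_cube)
  ultimately show ?thesis
    by linarith
qed

lemma abs_le_abs_sin_pi:
  assumes "\<bar>u\<bar> \<le> 1/2"
  shows "\<bar>u\<bar> \<le> \<bar>sin (pi * u)\<bar>"
proof -
  have "3 * \<bar>u\<bar> \<le> pi * \<bar>u\<bar>"
    using pi_gt3 by (intro mult_right_mono) auto
  then have "\<bar>u\<bar> \<le> pi * \<bar>u\<bar> / 3"
    by simp
  also have "\<dots> \<le> sin (pi * \<bar>u\<bar>)"
  proof (intro sin_ge_third)
    have "pi * \<bar>u\<bar> \<le> pi * (1/2)"
      using assms by (intro mult_left_mono) auto
    then show "pi * \<bar>u\<bar> \<le> 2"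
      using pi_less_4 by linarith
  qed simp
  also have "\<dots> = \<bar>sin (pi * \<bar>u\<bar>)\<bar>"
    using assms mult_left_le[of "\<bar>u\<bar>" pi] by (intro abs_of_nonneg[symmetric] sin_ge_zero) auto
  also have "\<dots> = \<bar>sin (pi * u)\<bar>"
    by (cases "0 \<le> u") simp_all
  finally show ?thesis .
qed

lemma abs_sub_round_lt_if_abs_sin_pi_lt:
  assumes "\<bar>sin (pi * t)\<bar> < d"
  shows "\<bar>t - round t\<bar> < d"
proof -
  have "\<bar>t - round t\<bar> \<le> 1/2"
    using of_int_round_abs_le[of t] by (simp add: abs_minus_commute)
  then have "\<bar>t - round t\<bar> \<le> \<bar>sin (pi * (t - round t))\<bar>"
    by (rule abs_le_abs_sin_pi)
  with assms show ?thesis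
    by (simp only: abs_sin_pi_diff_int)
qed

lemma not_tendsto_zero_if_nondecreasing_below:
  fixes s :: "nat \<Rightarrow> real"
  assumes pos: "\<And>n. 0 < s n" and "0 < a" and grow: "\<And>n. s n < a \<Longrightarrow> s n \<le> s (Suc n)"
  shows "\<not> s \<longlonglongrightarrow> 0"
proof
  assume lim: "s \<longlonglongrightarrow> 0"
  from order_tendstoD(2)[OF lim \<open>0 < a\<close>] obtain N where small: "\<And>n. n \<ge> N \<Longrightarrow> s n < a"
    by (auto simp: eventually_sequentially)
  have "s N \<le> s n" if "N \<le> n" for n
    using that
  proof (induction rule: dec_induct)
    case (step m)
    then show ?case using grow[of m] small[of m] by linarith
  qed simp
  then have "s N \<le> 0"
    using lim by (intro LIMSEQ_le_const) auto
  with pos[of N] show False by simp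
qed

lemma tendsto_zero_if_ln_over_n_tendsto_neg:
  fixes s :: "nat \<Rightarrow> real"
  assumes pos: "\<And>n. 0 < s n" and lim: "(\<lambda>n. ereal (ln (s n) / n)) \<longlonglongrightarrow> l" and "l < 0"
  shows "s \<longlonglongrightarrow> 0"
proof -
  obtain r where r: "l < ereal r" "ereal r < 0"
    using ereal_dense2[OF \<open>l < 0\<close>] by blast
  have "\<forall>\<^sub>F n in sequentially. s n \<le> exp r ^ n"
    using order_tendstoD(2)[OF lim r(1)] eventually_gt_at_top[of 0]
  proof eventually_elim
    case (elim n)
    then have "ln (s n) \<le> n * r"
      by (simp add: pos_divide_less_eq mult.commute)
    then have "exp (ln (s n)) \<le> exp (n * r)"
      by simp
    then show ?case
      using pos[of n] by (simp add: exp_of_nat_mult)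
  qed
  moreover have "(\<lambda>n. exp r ^ n) \<longlonglongrightarrow> 0"
    using r(2) by (intro LIMSEQ_power_zero) simp
  moreover have "\<forall>\<^sub>F n in sequentially. 0 \<le> s n"
    using pos by (simp add: less_imp_le)
  ultimately show ?thesis
    by (intro tendsto_sandwich[of "\<lambda>_. 0" s _ "\<lambda>n. exp r ^ n"]) simp_all
qed

lemma tendsto_ln_over_n_eq_0:
  fixes s :: "nat \<Rightarrow> real"
  assumes pos: "\<And>n. 0 < s n" and le1: "\<And>n. s n \<le> 1" and "0 < a"
    and grow: "\<And>n. s n < a \<Longrightarrow> s n \<le> s (Suc n)"
    and lim: "(\<lambda>n. ereal (ln (s n) / n)) \<longlonglongrightarrow> l"
  shows "l = 0"
proof (rule antisym)
  show "l \<le> 0"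
  proof (rule LIMSEQ_le_const2[OF lim], intro exI allI impI)
    fix n
    have "ln (s n) \<le> 0"
      using pos[of n] le1[of n] by simp
    then show "ereal (ln (s n) / n) \<le> 0"
      by (simp add: divide_nonpos_nonneg)
  qed
  show "0 \<le> l"
    using tendsto_zero_if_ln_over_n_tendsto_neg[where s = s, OF pos lim]
      not_tendsto_zero_if_nondecreasing_below[where s = s, OF pos \<open>0 < a\<close> grow]
    by (meson not_le)
qed

lemma tendsto_ln_over_n_zero_if_subexponential:
  fixes s :: "nat \<Rightarrow> real"
  assumes le1: "\<And>n. s n \<le> 1"
    and ge: "\<And>e::real. 0 < e \<Longrightarrow> \<forall>\<^sub>F n in sequentially. exp (- e * n) \<le> s n"
  shows "(\<lambda>n. ln (s n) / n) \<longlonglongrightarrow> 0"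
proof (rule tendstoI)
  fix e :: real assume "0 < e"
  then have "e / 2 > 0" by simp
  show "\<forall>\<^sub>F n in sequentially. dist (ln (s n) / n) 0 < e"
    using ge[OF \<open>e / 2 > 0\<close>] eventually_gt_at_top[of 0]
  proof eventually_elim
    case (elim n)
    have pos: "0 < s n"
      using elim(1) by (rule less_le_trans[OF exp_gt_zero])
    have "- (e / 2) * n \<le> ln (s n)"
      using elim(1) pos by (subst ln_ge_iff) auto
    moreover have "ln (s n) \<le> 0"
      using pos le1[of n] by simp
    ultimately show ?case
      using elim(2) \<open>0 < e\<close> by (simp add: abs_if field_simps)
  qed
qed

section \<open>Birkhoff averages\<close>

lemma f0_le_0: "f0 x \<le> 0"
  by (simp add: f0_def)

lemma sin_pi_pow2_nonzero_le:
  assumes "sin (pi * (2 ^ n * x)) \<noteq> 0" and "k \<le> n"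
  shows "sin (pi * (2 ^ k * x)) \<noteq> 0"
  using assms(2,1)
proof (induction rule: dec_induct)
  case (step m)
  then show ?case unfolding sin_pi_pow2_Suc by simp
qed

lemma sin_pi_pow2_nonzero_if_eventually:
  assumes "\<forall>\<^sub>F n in sequentially. sin (pi * (2 ^ n * x)) \<noteq> 0"
  shows "sin (pi * (2 ^ n * x)) \<noteq> 0"
proof -
  obtain N where "\<And>m. m \<ge> N \<Longrightarrow> sin (pi * (2 ^ m * x)) \<noteq> 0"
    using assms by (auto simp: eventually_sequentially)
  then show ?thesis
    using sin_pi_pow2_nonzero_le[of "max n N" x n] by simp
qed

lemma sum_f0_telescope:
  assumes "sin (pi * (2 ^ n * x)) \<noteq> 0"
  shows "(\<Sum>k<n. f0 (2 ^ k * x)) =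
    ereal (ln \<bar>sin (pi * (2 ^ n * x))\<bar> - ln \<bar>sin (pi * x)\<bar> - real n * ln 2)"
  using assms
proof (induction n)
  case (Suc n)
  have s: "sin (pi * (2 ^ n * x)) \<noteq> 0" and c: "cos (pi * (2 ^ n * x)) \<noteq> 0"
    using Suc.prems unfolding sin_pi_pow2_Suc by simp_all
  have "ln \<bar>sin (pi * (2 ^ Suc n * x))\<bar> =
      ln 2 + ln \<bar>sin (pi * (2 ^ n * x))\<bar> + ln \<bar>cos (pi * (2 ^ n * x))\<bar>"
    using s c unfolding sin_pi_pow2_Suc by (simp add: abs_mult ln_mult)
  then show ?case
    using Suc.IH[OF s] c by (simp add: f0_def algebra_simps)
qed simp

lemma birkhoff_avg_telescope:
  assumes "sin (pi * (2 ^ n * x)) \<noteq> 0" and "n \<noteq> 0"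
  shows "birkhoff_avg n x =
    ereal (ln \<bar>sin (pi * (2 ^ n * x))\<bar> / n) + ereal (- ln \<bar>sin (pi * x)\<bar> / n - ln 2)"
  using assms unfolding birkhoff_avg_def sum_f0_telescope[OF assms(1)] by (simp add: field_simps)

lemma birkhoff_avg_tendsto_iff:
  assumes "\<And>n. sin (pi * (2 ^ n * x)) \<noteq> 0"
  shows "(\<lambda>n. birkhoff_avg n x) \<longlonglongrightarrow> L \<longleftrightarrow>
    (\<lambda>n. ereal (ln \<bar>sin (pi * (2 ^ n * x))\<bar> / n)) \<longlonglongrightarrow> L + ereal (ln 2)"
proof -
  define a where "a n = ereal (ln \<bar>sin (pi * (2 ^ n * x))\<bar> / n)" for n
  define c where "c n = ereal (- ln \<bar>sin (pi * x)\<bar> / n - ln 2)" for n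
  have c: "c \<longlonglongrightarrow> - ereal (ln 2)"
    unfolding c_def by (auto intro!: tendsto_eq_intros lim_const_over_n)
  have "eventually (\<lambda>n. birkhoff_avg n x = a n + c n) sequentially"
    using eventually_gt_at_top[of 0]
    by eventually_elim (simp add: a_def c_def birkhoff_avg_telescope assms)
  then have "(\<lambda>n. birkhoff_avg n x) \<longlonglongrightarrow> L \<longleftrightarrow> (\<lambda>n. a n + c n) \<longlonglongrightarrow> L"
    by (rule tendsto_cong)
  also have "\<dots> \<longleftrightarrow> a \<longlonglongrightarrow> L + ereal (ln 2)"
  proof
    assume "(\<lambda>n. a n + c n) \<longlonglongrightarrow> L"
    then have "(\<lambda>n. (a n + c n) - c n) \<longlonglongrightarrow> L - - ereal (ln 2)"
      by (intro tendsto_diff_ereal_general c) auto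
    moreover have "(a n + c n) - c n = a n" for n
      by (cases "a n") (simp_all add: c_def)
    ultimately show "a \<longlonglongrightarrow> L + ereal (ln 2)"
      by (cases L) simp_all
  next
    assume "a \<longlonglongrightarrow> L + ereal (ln 2)"
    then have "(\<lambda>n. a n + c n) \<longlonglongrightarrow> (L + ereal (ln 2)) + - ereal (ln 2)"
      by (intro tendsto_add_ereal_general c) auto
    then show "(\<lambda>n. a n + c n) \<longlonglongrightarrow> L"
      by (cases L) auto
  qed
  finally show ?thesis unfolding a_def[abs_def] .
qed

lemma birkhoff_avg_zero: "birkhoff_avg n 0 = 0"
  by (simp add: birkhoff_avg_def f0_def zero_ereal_def)

lemma cos_pi_pow2_zero_if_dyadic_odd:
  assumes "dyadic_odd x"
  obtains m where "cos (pi * (2 ^ m * x)) = 0"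
proof -
  obtain k :: int and m :: nat where "m \<ge> 1" and x: "x = of_int (2 * k + 1) / 2 ^ m"
    using assms unfolding dyadic_odd_def by blast
  then obtain m' where m: "m = Suc m'"
    using not0_implies_Suc by fastforce
  have "pi * (2 ^ m' * x) = of_int (2 * k + 1) * (pi / 2)"
    using x m by (simp add: field_simps)
  then have "cos (pi * (2 ^ m' * x)) = 0"
    unfolding cos_zero_iff_int by (intro exI[of _ "2 * k + 1"]) simp
  then show thesis by (rule that)
qed

lemma birkhoff_avg_dyadic_odd:
  assumes "dyadic_odd x"
  shows "(\<lambda>n. birkhoff_avg n x) \<longlonglongrightarrow> -\<infinity>"
proof -
  obtain m where m: "cos (pi * (2 ^ m * x)) = 0"
    using cos_pi_pow2_zero_if_dyadic_odd[OF assms] .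
  have "birkhoff_avg n x = -\<infinity>" if "m < n" for n
  proof -
    have "(\<Sum>k<n. f0 (2 ^ k * x)) = f0 (2 ^ m * x) + (\<Sum>k\<in>{..<n} - {m}. f0 (2 ^ k * x))"
      using that by (intro sum.remove) auto
    also have "\<dots> = -\<infinity>"
      using m sum_nonpos[of "{..<n} - {m}" "\<lambda>k. f0 (2 ^ k * x)"] f0_le_0
      by (cases "\<Sum>k\<in>{..<n} - {m}. f0 (2 ^ k * x)") (simp_all add: f0_def)
    finally have "(\<Sum>k<n. f0 (2 ^ k * x)) = -\<infinity>" .
    then show ?thesis
      using that by (simp add: birkhoff_avg_def)
  qed
  then show ?thesis
    by (intro tendsto_eventually) (auto simp: eventually_at_top_dense)
qed

lemma dyadic_odd_if_pow2_mult_int: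
  assumes "0 < x" "x < 1" "2 ^ n * x = of_int i"
  shows "dyadic_odd x"
  using assms(3)
proof (induction n arbitrary: i)
  case 0
  then show ?case using assms(1,2) by auto
next
  case (Suc n)
  show ?case
  proof (cases "even i")
    case True
    then obtain j where "i = 2 * j" by blast
    then show ?thesis using Suc by simp
  next
    case False
    then obtain j where "i = 2 * j + 1" by (metis oddE)
    then have "x = of_int (2 * j + 1) / 2 ^ Suc n"
      using Suc.prems by (simp add: field_simps)
    then show ?thesis
      unfolding dyadic_odd_def by (intro exI[of _ j] exI[of _ "Suc n"]) simp
  qed
qed

lemma sin_pi_pow2_nonzero_if_not_dyadic_odd:
  assumes "x \<in> {0..<1}" "x \<noteq> 0" "\<not> dyadic_odd x"
  shows "sin (pi * (2 ^ n * x)) \<noteq> 0"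
proof
  assume "sin (pi * (2 ^ n * x)) = 0"
  then obtain i where "2 ^ n * x = of_int i"
    by (auto simp: sin_zero_iff_int2)
  moreover have "0 < x" "x < 1"
    using assms(1,2) by auto
  ultimately show False
    using dyadic_odd_if_pow2_mult_int assms(3) by blast
qed

lemma birkhoff_avg_limit_not_dyadic_odd:
  assumes "x \<in> {0..<1}" "x \<noteq> 0" "\<not> dyadic_odd x" and "(\<lambda>n. birkhoff_avg n x) \<longlonglongrightarrow> L"
  shows "L = - ereal (ln 2)"
proof -
  define s where "s n = \<bar>sin (pi * (2 ^ n * x))\<bar>" for n
  have nz: "sin (pi * (2 ^ n * x)) \<noteq> 0" for n
    using sin_pi_pow2_nonzero_if_not_dyadic_odd assms(1-3) .
  have "L + ereal (ln 2) = 0"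
  proof (rule tendsto_ln_over_n_eq_0)
    show "0 < s n" "s n \<le> 1" for n
      using nz[of n] by (simp_all add: s_def)
    show "s n \<le> s (Suc n)" if "s n < 1/2" for n
      using abs_sin_le_abs_sin_double[of "pi * (2 ^ n * x)"] that
      by (simp add: s_def mult.assoc mult.left_commute)
    show "(\<lambda>n. ereal (ln (s n) / n)) \<longlonglongrightarrow> L + ereal (ln 2)"
      using assms(4) birkhoff_avg_tendsto_iff[OF nz] by (simp add: s_def)
  qed simp
  then show ?thesis
    by (cases L) simp_all
qed

lemma birkhoff_avg_limit_cases:
  assumes "x \<in> {0..<1}" and lim: "(\<lambda>n. birkhoff_avg n x) \<longlonglongrightarrow> L"
  shows "L \<in> {0, - ereal (ln 2), -\<infinity>}"
proof (cases "x = 0")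
  case True
  then show ?thesis
    using LIMSEQ_unique[OF lim] by (simp add: birkhoff_avg_zero)
next
  case False
  then show ?thesis
    using assms birkhoff_avg_limit_not_dyadic_odd LIMSEQ_unique[OF lim birkhoff_avg_dyadic_odd]
    by (cases "dyadic_odd x") simp_all
qed

lemma emeasure_abs_sin_pi_pow2_less:
  assumes "0 < d"
  shows "emeasure lborel {x \<in> {0..<1}. \<bar>sin (pi * (2 ^ n * x))\<bar> < d} \<le> ennreal (4 * d)"
proof -
  let ?I = "\<lambda>i::nat. {(i - d) / 2 ^ n <..< (i + d) / 2 ^ n}"
  have cover: "{x \<in> {0..<1}. \<bar>sin (pi * (2 ^ n * x))\<bar> < d} \<subseteq> (\<Union>i\<le>2 ^ n. ?I i)"
  proof safe
    fix x :: real assume x: "x \<in> {0..<1}" and small: "\<bar>sin (pi * (2 ^ n * x))\<bar> < d"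
    from small have close: "\<bar>2 ^ n * x - round (2 ^ n * x)\<bar> < d"
      by (rule abs_sub_round_lt_if_abs_sin_pi_lt)
    have "0 \<le> round (2 ^ n * x)" "round (2 ^ n * x) \<le> round ((2::real) ^ n)"
      using x round_mono[of 0 "2 ^ n * x"] round_mono[of "2 ^ n * x" "2 ^ n"] by auto
    then obtain i :: nat where i: "round (2 ^ n * x) = int i" "i \<le> 2 ^ n"
      by (metis nonneg_int_cases of_nat_le_iff of_nat_numeral of_nat_power round_of_nat
          of_int_of_nat_eq)
    then have "x \<in> ?I i"
      using close by (auto simp: abs_less_iff field_simps)
    with i show "x \<in> (\<Union>i\<le>2 ^ n. ?I i)"
      by blast
  qed
  have "emeasure lborel {x \<in> {0..<1}. \<bar>sin (pi * (2 ^ n * x))\<bar> < d} \<le>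
      (\<Sum>i\<le>(2::nat) ^ n. emeasure lborel (?I i))"
    by (rule order_trans[OF emeasure_mono[OF cover] emeasure_subadditive_finite]) auto
  also have "\<dots> = (\<Sum>i\<le>(2::nat) ^ n. ennreal (2 * d / 2 ^ n))"
    using assms by (intro sum.cong) (simp_all add: divide_right_mono diff_divide_distrib[symmetric])
  also have "\<dots> = ennreal ((2 ^ n + 1) * (2 * d / 2 ^ n))"
    using assms
    by (subst ennreal_mult) (auto simp: ennreal_plus ennreal_power[symmetric] add.commute)
  also have "\<dots> \<le> ennreal (4 * d)"
    using assms by (intro ennreal_leI) (simp add: field_simps)
  finally show ?thesis .
qed

lemma AE_abs_sin_pi_pow2_ge:
  fixes e :: real
  assumes "0 < e"
  shows "AE x in lborel. x \<in> {0..<1} \<longrightarrow>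
    (\<forall>\<^sub>F n in sequentially. exp (- e * n) \<le> \<bar>sin (pi * (2 ^ n * x))\<bar>)"
proof -
  define A where "A n = {x \<in> {0..<1}. \<bar>sin (pi * (2 ^ n * x))\<bar> < exp (- e * n)}" for n
  have meas: "measure lborel (A n) \<le> 4 * exp (- e) ^ n" for n
    using emeasure_abs_sin_pi_pow2_less[of "exp (- e * n)" n]
    by (simp add: A_def measure_def enn2real_leI exp_of_nat_mult[symmetric] mult.commute)
  have "AE x in lborel. \<forall>\<^sub>F n in sequentially. x \<in> space lborel - A n"
  proof (rule borel_cantelli_AE1)
    show "A n \<in> sets lborel" for n
      unfolding A_def by measurable
    show "emeasure lborel (A n) < \<infinity>" for n
      using emeasure_abs_sin_pi_pow2_less[of "exp (- e * n)" n]
      by (simp add: A_def le_less_trans[OF _ ennreal_less_top])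
    have "summable (\<lambda>n. 4 * exp (- e) ^ n)"
      using assms by (intro summable_mult summable_geometric) simp
    then show "summable (\<lambda>n. measure lborel (A n))"
      by (rule summable_comparison_test') (use meas in simp)
  qed
  then show ?thesis
    by (rule eventually_mono) (auto elim!: eventually_mono simp: A_def not_less)
qed

lemma birkhoff_avg_tendsto_if_subexponential:
  assumes "\<And>e::real. 0 < e \<Longrightarrow> \<forall>\<^sub>F n in sequentially. exp (- e * n) \<le> \<bar>sin (pi * (2 ^ n * x))\<bar>"
  shows "(\<lambda>n. birkhoff_avg n x) \<longlonglongrightarrow> - ereal (ln 2)"
proof -
  have nz: "sin (pi * (2 ^ n * x)) \<noteq> 0" for n
    using assms[of 1] by (intro sin_pi_pow2_nonzero_if_eventually) (auto elim: eventually_mono)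
  have "(\<lambda>n. ln \<bar>sin (pi * (2 ^ n * x))\<bar> / n) \<longlonglongrightarrow> 0"
    using assms by (intro tendsto_ln_over_n_zero_if_subexponential) simp_all
  then show ?thesis
    using birkhoff_avg_tendsto_iff[OF nz] by (simp add: zero_ereal_def)
qed

lemma AE_birkhoff_avg_tendsto:
  "AE x in lborel. x \<in> {0..<1} \<longrightarrow> (\<lambda>n. birkhoff_avg n x) \<longlonglongrightarrow> - ereal (ln 2)"
proof -
  have "AE x in lborel. \<forall>j::nat. x \<in> {0..<1} \<longrightarrow>
      (\<forall>\<^sub>F n in sequentially. exp (- (1 / Suc j) * n) \<le> \<bar>sin (pi * (2 ^ n * x))\<bar>)"
    by (subst AE_all_countable) (intro allI AE_abs_sin_pi_pow2_ge; simp)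
  then show ?thesis
  proof (rule eventually_mono, intro impI birkhoff_avg_tendsto_if_subexponential)
    fix x :: real and e :: real
    assume x: "\<forall>j::nat. x \<in> {0..<1} \<longrightarrow>
        (\<forall>\<^sub>F n in sequentially. exp (- (1 / Suc j) * n) \<le> \<bar>sin (pi * (2 ^ n * x))\<bar>)"
      and "x \<in> {0..<1}" and "0 < e"
    then obtain j where j: "1 / Suc j < e"
      using reals_Archimedean by (auto simp: inverse_eq_divide)
    have le: "exp (- e * n) \<le> exp (- (1 / Suc j) * n)" for n :: nat
      using mult_right_mono[of "1 / Suc j" e "real n"] j by simp
    from x \<open>x \<in> {0..<1}\<close>
    have "\<forall>\<^sub>F n in sequentially. exp (- (1 / Suc j) * n) \<le> \<bar>sin (pi * (2 ^ n * x))\<bar>"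
      by blast
    then show "\<forall>\<^sub>F n in sequentially. exp (- e * n) \<le> \<bar>sin (pi * (2 ^ n * x))\<bar>"
      by (rule eventually_mono) (rule order_trans[OF le])
  qed
qed

section \<open>Integrals against invariant measures\<close>

lemma nn_integral_le_of_liminf_coboundary:
  fixes T :: "'a \<Rightarrow> 'a" and g :: "nat \<Rightarrow> 'a \<Rightarrow> real"
  assumes "prob_space M" and T: "T \<in> M \<rightarrow>\<^sub>M M" and inv: "distr M M T = M"
    and int: "\<And>m. integrable M (g m)"
    and step: "\<And>m x. x \<in> space M \<Longrightarrow> g m (T x) \<le> g m x + c"
    and h: "\<And>x. x \<in> space M \<Longrightarrow> h x \<le> liminf (\<lambda>m. ennreal (c + g m x - g m (T x)))"
  shows "(\<integral>\<^sup>+x. h x \<partial>M) \<le> ennreal c"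
proof -
  interpret prob_space M by fact
  have meas [measurable]: "g m \<in> borel_measurable M" for m
    using int by auto
  have int_T: "integrable M (\<lambda>x. g m (T x))" for m
    using int[of m] integrable_distr_eq[OF T meas, of m] by (simp add: inv)
  have "(\<integral>x. g m (T x) \<partial>M) = (\<integral>x. g m x \<partial>M)" for m
    using integral_distr[OF T meas, of m] by (simp add: inv)
  then have "(\<integral>x. c + g m x - g m (T x) \<partial>M) = c" for m
    using int[of m] int_T[of m] by (simp add: prob_space)
  moreover have "x \<in> space M \<Longrightarrow> 0 \<le> c + g m x - g m (T x)" for x m
    using step[of x m] by simp
  ultimately have cob: "(\<integral>\<^sup>+x. ennreal (c + g m x - g m (T x)) \<partial>M) = ennreal c" for m
    using int[of m] int_T[of m] by (subst nn_integral_eq_integral) (auto intro!: AE_I2)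
  have "(\<integral>\<^sup>+x. h x \<partial>M) \<le> (\<integral>\<^sup>+x. liminf (\<lambda>m. ennreal (c + g m x - g m (T x))) \<partial>M)"
    by (intro nn_integral_mono h)
  also have "\<dots> \<le> liminf (\<lambda>m. \<integral>\<^sup>+x. ennreal (c + g m x - g m (T x)) \<partial>M)"
    using T by (intro nn_integral_liminf) measurable
  also have "\<dots> = ennreal c"
    by (simp add: cob Liminf_const)
  finally show ?thesis .
qed

lemma space_circle_borel: "space circle_borel = {0..<1}"
  by (simp add: circle_borel_def)

lemma doubling_measurable: "doubling \<in> circle_borel \<rightarrow>\<^sub>M circle_borel"
  unfolding circle_borel_def doubling_def frac_def
  by (rule measurable_restrict_space3) (auto simp: frac_lt_1[unfolded frac_def])

lemma invariant_measuresD: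
  assumes "\<mu> \<in> invariant_measures"
  shows "prob_space \<mu>" and "sets \<mu> = sets circle_borel" and "doubling \<in> \<mu> \<rightarrow>\<^sub>M \<mu>"
    and "distr \<mu> \<mu> doubling = \<mu>"
proof -
  show "prob_space \<mu>" and sets: "sets \<mu> = sets circle_borel"
    using assms by (auto simp: invariant_measures_def)
  then show meas: "doubling \<in> \<mu> \<rightarrow>\<^sub>M \<mu>"
    using doubling_measurable measurable_cong_sets by blast
  show "distr \<mu> \<mu> doubling = \<mu>"
    using assms by (intro measure_eqI) (auto simp: emeasure_distr[OF meas] invariant_measures_def)
qed

(* Bounded stand-in for g = log|sin(pi x)| in the coboundary relation f0 = g o T - g - log 2. *)
definition trunc_log_sin :: "nat \<Rightarrow> real \<Rightarrow> real" where
  "trunc_log_sin m x = ln (max \<bar>sin (pi * x)\<bar> (exp (- real m)))"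

lemma abs_trunc_log_sin_le: "\<bar>trunc_log_sin m x\<bar> \<le> m"
proof -
  have pos: "0 < max \<bar>sin (pi * x)\<bar> (exp (- real m))"
    by (simp add: max.strict_coboundedI2)
  have "- real m \<le> trunc_log_sin m x"
    unfolding trunc_log_sin_def using pos by (subst ln_ge_iff) auto
  moreover have "trunc_log_sin m x \<le> 0"
    unfolding trunc_log_sin_def using pos by (subst ln_le_zero_iff) auto
  ultimately show ?thesis
    by linarith
qed

lemma trunc_log_sin_doubling_le: "trunc_log_sin m (doubling x) \<le> trunc_log_sin m x + ln 2"
proof -
  have "\<bar>sin (pi * doubling x)\<bar> \<le> 2 * \<bar>sin (pi * x)\<bar>"
    unfolding abs_sin_pi_doubling using abs_cos_le_one[of "pi * x"]
    by (simp add: mult_left_le)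
  then have "max \<bar>sin (pi * doubling x)\<bar> (exp (- real m)) \<le> 2 * max \<bar>sin (pi * x)\<bar> (exp (- real m))"
    by auto
  then have "trunc_log_sin m (doubling x) \<le> ln (2 * max \<bar>sin (pi * x)\<bar> (exp (- real m)))"
    unfolding trunc_log_sin_def by (subst ln_le_cancel_iff) (auto simp: max.strict_coboundedI2)
  also have "\<dots> = ln 2 + ln (max \<bar>sin (pi * x)\<bar> (exp (- real m)))"
    by (rule ln_mult_pos) (simp_all add: max.strict_coboundedI2)
  also have "\<dots> = trunc_log_sin m x + ln 2"
    by (simp add: trunc_log_sin_def)
  finally show ?thesis .
qed

lemma eventually_trunc_log_sin_eq:
  assumes "sin (pi * x) \<noteq> 0"
  shows "\<forall>\<^sub>F m in sequentially. trunc_log_sin m x = ln \<bar>sin (pi * x)\<bar>"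
proof -
  have "(\<lambda>m. exp (- real m)) \<longlonglongrightarrow> 0"
    by real_asymp
  then have "\<forall>\<^sub>F m in sequentially. exp (- real m) < \<bar>sin (pi * x)\<bar>"
    using assms by (intro order_tendstoD(2)) auto
  then show ?thesis
    by eventually_elim (simp add: trunc_log_sin_def)
qed

lemma neg_f0_le_liminf_trunc_log_sin:
  "e2ennreal (- f0 x) \<le>
    liminf (\<lambda>m. ennreal (ln 2 + trunc_log_sin m x - trunc_log_sin m (doubling x)))"
proof (cases "cos (pi * x) = 0")
  case True
  then have "\<bar>sin (pi * x)\<bar> = 1" and "sin (pi * doubling x) = 0"
    using sin_cos_squared_add[of "pi * x"] abs_sin_pi_doubling[of x] by (auto simp: abs_square_eq_1)
  then have seq: "(\<lambda>m. ln 2 + trunc_log_sin m x - trunc_log_sin m (doubling x)) = (\<lambda>m. ln 2 + m)"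
    by (simp add: trunc_log_sin_def)
  have "(\<lambda>m. ennreal (ln 2 + trunc_log_sin m x - trunc_log_sin m (doubling x))) \<longlonglongrightarrow> top"
    unfolding ennreal_tendsto_top_eq_at_top seq by real_asymp
  then have "liminf (\<lambda>m. ennreal (ln 2 + trunc_log_sin m x - trunc_log_sin m (doubling x))) = top"
    by (intro lim_imp_Liminf) simp_all
  then show ?thesis
    by simp
next
  case cos: False
  show ?thesis
  proof (cases "sin (pi * x) = 0")
    case True
    then have "\<bar>cos (pi * x)\<bar> = 1"
      using sin_cos_squared_add[of "pi * x"] by (simp add: abs_square_eq_1)
    then show ?thesis
      using cos by (simp add: f0_def)
  next
    case sin: False
    have sin_doubling: "sin (pi * doubling x) \<noteq> 0"
      using sin cos abs_sin_pi_doubling[of x] by auto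
    have "\<forall>\<^sub>F m in sequentially.
        ln 2 + trunc_log_sin m x - trunc_log_sin m (doubling x) = - ln \<bar>cos (pi * x)\<bar>"
      using eventually_trunc_log_sin_eq[OF sin] eventually_trunc_log_sin_eq[OF sin_doubling]
      by eventually_elim (use sin cos in \<open>simp add: abs_sin_pi_doubling ln_mult\<close>)
    then show ?thesis
      using cos by (intro Liminf_bounded) (auto elim!: eventually_mono simp: f0_def)
  qed
qed

lemma int_f0_ge:
  assumes "\<mu> \<in> invariant_measures"
  shows "- ereal (ln 2) \<le> int_f0 \<mu>"
proof -
  note \<mu> = invariant_measuresD[OF assms]
  interpret prob_space \<mu> by (fact \<mu>(1))
  have meas: "trunc_log_sin m \<in> borel_measurable \<mu>" for m
    unfolding measurable_cong_sets[OF \<mu>(2) refl] circle_borel_def trunc_log_sin_def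
    by (intro measurable_restrict_space1) measurable
  have "(\<integral>\<^sup>+x. e2ennreal (- f0 x) \<partial>\<mu>) \<le> ennreal (ln 2)"
  proof (rule nn_integral_le_of_liminf_coboundary[OF \<mu>(1,3,4), where g = trunc_log_sin])
    show "integrable \<mu> (trunc_log_sin m)" for m
      using meas abs_trunc_log_sin_le[of m]
      by (intro integrable_const_bound[where B = m] AE_I2) simp_all
  qed (simp_all add: trunc_log_sin_doubling_le neg_f0_le_liminf_trunc_log_sin)
  then have "enn2ereal (\<integral>\<^sup>+x. e2ennreal (- f0 x) \<partial>\<mu>) \<le> ereal (ln 2)"
    by (simp add: less_eq_ennreal.rep_eq)
  then show ?thesis
    unfolding int_f0_def by (metis ereal_minus_le_minus uminus_ereal.simps(1))
qed

lemma int_f0_le_0: "int_f0 \<mu> \<le> 0"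
  by (simp add: int_f0_def)

(* distr along id only replaces the sigma-algebra Pow A by the Borel sets of the circle. *)
definition orbit_measure :: "real set \<Rightarrow> real measure" where
  "orbit_measure A = distr (uniform_count_measure A) circle_borel id"

lemma id_measurable_uniform_count_measure:
  "A \<subseteq> {0..<1} \<Longrightarrow> id \<in> uniform_count_measure A \<rightarrow>\<^sub>M circle_borel"
  by (auto simp: measurable_cong_sets[OF sets_uniform_count_measure_count_space refl]
      space_circle_borel)

lemma sets_orbit_measure [simp]: "sets (orbit_measure A) = sets circle_borel"
  by (simp add: orbit_measure_def)

lemma space_orbit_measure [simp]: "space (orbit_measure A) = {0..<1}"
  by (simp add: orbit_measure_def space_circle_borel)

lemma emeasure_orbit_measure:
  assumes "finite A" "A \<subseteq> {0..<1}" "B \<in> sets circle_borel"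
  shows "emeasure (orbit_measure A) B = card (A \<inter> B) / card A"
  using assms
  by (simp add: orbit_measure_def emeasure_distr[OF id_measurable_uniform_count_measure]
      emeasure_uniform_count_measure space_uniform_count_measure Int_commute)

lemma orbit_measure_invariant:
  assumes "finite A" "A \<noteq> {}" "A \<subseteq> {0..<1}" and orbit: "doubling ` A = A"
  shows "orbit_measure A \<in> invariant_measures"
  unfolding invariant_measures_def
proof (intro CollectI conjI ballI)
  show "sets (orbit_measure A) = sets circle_borel"
    by simp
  show "prob_space (orbit_measure A)"
    unfolding orbit_measure_def using assms
    by (intro prob_space.prob_space_distr prob_space_uniform_count_measure
        id_measurable_uniform_count_measure)
  fix B assume "B \<in> sets (orbit_measure A)"
  then have B: "B \<in> sets circle_borel" "doubling -` B \<inter> {0..<1} \<in> sets circle_borel"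
    using measurable_sets[OF doubling_measurable] by (auto simp: space_circle_borel)
  have "inj_on doubling A"
    using assms(1) orbit by (simp add: eq_card_imp_inj_on)
  moreover have "doubling ` (A \<inter> doubling -` B) = doubling ` A \<inter> B"
    by blast
  ultimately have "card (A \<inter> B) = card (A \<inter> doubling -` B)"
    using card_image[OF inj_on_subset, of doubling A "A \<inter> doubling -` B"] by (simp add: orbit)
  also have "A \<inter> doubling -` B = A \<inter> (doubling -` B \<inter> {0..<1})"
    using assms(3) by auto
  finally show "emeasure (orbit_measure A) (doubling -` B \<inter> space (orbit_measure A)) =
      emeasure (orbit_measure A) B"
    using assms(1,3) B by (simp add: emeasure_orbit_measure)
qed

lemma int_f0_orbit_measure:
  assumes "finite A" "A \<noteq> {}" "A \<subseteq> {0..<1}" and const: "\<And>a. a \<in> A \<Longrightarrow> f0 a = ereal c"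
  shows "int_f0 (orbit_measure A) = ereal c"
proof -
  obtain a where "a \<in> A"
    using assms(2) by blast
  then have "c \<le> 0"
    using const f0_le_0[of a] by simp
  have meas: "(\<lambda>x. e2ennreal (- f0 x)) \<in> borel_measurable (orbit_measure A)"
    unfolding orbit_measure_def measurable_distr_eq1 circle_borel_def f0_def
    by (intro measurable_restrict_space1) measurable
  have "(\<integral>\<^sup>+x. e2ennreal (- f0 x) \<partial>orbit_measure A) =
      (\<integral>\<^sup>+x. e2ennreal (- f0 x) \<partial>uniform_count_measure A)"
    unfolding orbit_measure_def
    by (simp add: nn_integral_distr[OF id_measurable_uniform_count_measure[OF assms(3)]
        meas[unfolded orbit_measure_def]])
  also have "\<dots> = (\<Sum>a\<in>A. ennreal (1 / card A) * ennreal (- c))"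
    using assms(1) const by (simp add: uniform_count_measure_def nn_integral_point_measure_finite)
  also have "\<dots> = ennreal (- c)"
    using assms(1,2) \<open>c \<le> 0\<close> by (simp add: ennreal_mult'[symmetric] ennreal_of_nat_eq_real_of_nat)
  finally show ?thesis
    using \<open>c \<le> 0\<close> by (simp add: int_f0_def)
qed

lemma doubling_thirds: "doubling (1/3) = 2/3" "doubling (2/3) = 1/3"
proof -
  show "doubling (1/3) = 2/3"
    by (simp add: doubling_def frac_eq)
  have "frac (4/3 :: real) = 1/3"
    unfolding frac_unique_iff by simp
  then show "doubling (2/3) = 1/3"
    by (simp add: doubling_def)
qed

lemma f0_thirds: "f0 (1/3) = - ereal (ln 2)" "f0 (2/3) = - ereal (ln 2)"
proof -
  have "pi * (2/3) = pi - pi / 3"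
    by simp
  then have "cos (pi * (2/3)) = - cos (pi / 3)"
    by (simp only: cos_diff) simp
  then show "f0 (1/3) = - ereal (ln 2)" "f0 (2/3) = - ereal (ln 2)"
    by (simp_all add: f0_def cos_60 ln_div)
qed

lemma INF_int_f0: "(INF \<mu>\<in>invariant_measures. int_f0 \<mu>) = - ereal (ln 2)"
proof -
  have "orbit_measure {1/3, 2/3} \<in> invariant_measures"
    "int_f0 (orbit_measure {1/3, 2/3}) = - ereal (ln 2)"
    by (auto simp: doubling_thirds f0_thirds intro!: orbit_measure_invariant int_f0_orbit_measure)
  then show ?thesis
    by (metis INF_lower antisym INF_greatest int_f0_ge)
qed

lemma SUP_int_f0: "(SUP \<mu>\<in>invariant_measures. int_f0 \<mu>) = 0"
proof -
  have "orbit_measure {0} \<in> invariant_measures" "int_f0 (orbit_measure {0}) = 0"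
    by (auto simp: doubling_def f0_def zero_ereal_def
        intro!: orbit_measure_invariant int_f0_orbit_measure)
  then show ?thesis
    by (metis SUP_upper antisym SUP_least int_f0_le_0)
qed

theorem theorem5p1:
  shows "(INF \<mu>\<in>invariant_measures. int_f0 \<mu>) = - ereal (ln 2) \<and>
    (SUP \<mu>\<in>invariant_measures. int_f0 \<mu>) = 0 \<and>
    (\<forall>x\<in>{0..<1}. \<forall>L. (\<lambda>n. birkhoff_avg n x) \<longlonglongrightarrow> L \<longrightarrow>
           L \<in> {0, - ereal (ln 2), -\<infinity>}) \<and>
    ((\<lambda>n. birkhoff_avg n 0) \<longlonglongrightarrow> 0) \<and>
    (\<forall>x\<in>{0..<1}. dyadic_odd x \<longrightarrow> (\<lambda>n. birkhoff_avg n x) \<longlonglongrightarrow> -\<infinity>) \<and>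
    (\<forall>x\<in>{0..<1}. x \<noteq> 0 \<and> \<not> dyadic_odd x \<longrightarrow>
           (\<forall>L. (\<lambda>n. birkhoff_avg n x) \<longlonglongrightarrow> L \<longrightarrow> L = - ereal (ln 2))) \<and>
    (AE x in lborel. x \<in> {0..<1} \<longrightarrow>
           (\<lambda>n. birkhoff_avg n x) \<longlonglongrightarrow> - ereal (ln 2))"
proof -
  have "\<forall>x\<in>{0..<1}. x \<noteq> 0 \<and> \<not> dyadic_odd x \<longrightarrow>
      (\<forall>L. (\<lambda>n. birkhoff_avg n x) \<longlonglongrightarrow> L \<longrightarrow> L = - ereal (ln 2))"
    using birkhoff_avg_limit_not_dyadic_odd by blast
  then show ?thesis
    using INF_int_f0 SUP_int_f0 birkhoff_avg_limit_cases birkhoff_avg_dyadic_odd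
      AE_birkhoff_avg_tendsto
    by (simp add: birkhoff_avg_zero)
qed

end
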